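(* Let $F$, $H$, $X$, $\Omega$, $Q$ and the sequences generated by the IneIREG method be as described in the context, and suppose $H$ is $\mu$-strongly monotone for some $\mu>0$. Suppose $0<\lambda_k<1/L_k$ for all $k\ge0$, where $L_k:=L_F+\eta_kL_H$; and $\alpha_0\in[0,1]$ and $\alpha_{k+1}\le(1-\beta_k)\alpha_k$ for all $k\ge0$, where $\beta_k:=\big(\frac{1}{1-\lambda_k^2L_k^2}+\frac{1}{2\lambda_k\eta_k\mu}\big)^{-1}$. Define $p_{-1}:=1$ and $p_k:=\big(\prod_{i=0}^k(1-\beta_i)\big)^{-1}$ for $k\ge0$. Then for all $k\ge1$, $$\sum_{j=0}^{k-1}p_{j-1}\delta_j\le2kD_X^2.$$
   Context: Work in $\mathbb{R}^n$ with Euclidean inner product $\langle\cdot,\cdot\rangle$ and norm $\|\cdot\|$. The maps $F\colon \mathrm{Dom}\,F\to\mathbb{R}^n$ and $H\colon\mathrm{Dom}\,H\to\mathbb{R}^n$ are monotone and Lipschitz continuous with constants $L_F>0$ and $L_H>0$; $H$ is $\mu$-strongly monotone means $\langle H(x)-H(y),x-y\rangle\ge\mu\|x-y\|^2$ for all $x,y\in\mathrm{Dom}\,H$. $X$ is a nonempty compact convex set and $\Omega$ a nonempty closed convex set with $X\subset\Omega\subset\mathrm{Dom}\,F\cap\mathrm{Dom}\,H$; $P_X,P_\Omega$ denote orthogonal projections. $Q:=\{x\in X:\langle F(x),y-x\rangle\ge0\ \forall y\in X\}$ is assumed nonempty. $D_X:=\sup_{x,y\in X}\|x-y\|$. IneIREG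 method: start with $x_0=x_{-1}\in X$; for $k=0,1,\dots$, with parameters $\alpha_k\ge0$, $\lambda_k>0$, $\eta_k>0$, set $w_k=x_k+\alpha_k(x_k-x_{k-1})$, $w'_k=P_\Omega(w_k)$, $y_k=P_X\big(w_k-\lambda_k(F(w'_k)+\eta_kH(w'_k))\big)$, $x_{k+1}=P_X\big(w_k-\lambda_k(F(y_k)+\eta_kH(y_k))\big)$. Also $\delta_k:=\alpha_k(1+\alpha_k)\|x_k-x_{k-1}\|^2$ for $k\ge0$. *)

theory Defs
  imports "HOL-Analysis.Analysis"
begin

definition monotone_op :: "'a::real_inner set \<Rightarrow> ('a \<Rightarrow> 'a) \<Rightarrow> bool" where
  "monotone_op D F \<longleftrightarrow> (\<forall>x\<in>D. \<forall>y\<in>D. inner (F x - F y) (x - y) \<ge> 0)"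

definition strongly_monotone_op :: "real \<Rightarrow> 'a::real_inner set \<Rightarrow> ('a \<Rightarrow> 'a) \<Rightarrow> bool" where
  "strongly_monotone_op mu D H \<longleftrightarrow>
     (\<forall>x\<in>D. \<forall>y\<in>D. inner (H x - H y) (x - y) \<ge> mu * (norm (x - y))\<^sup>2)"

definition prev_iter :: "(nat \<Rightarrow> 'a) \<Rightarrow> nat \<Rightarrow> 'a" where
  "prev_iter x k = (if k = 0 then x 0 else x (k - 1))"

end

theory Submission
  imports Defs
begin

text \<open>Only two features of the method matter: every iterate is a projection onto X, so
  consecutive iterates are at most D_X apart, and the condition on alpha forces
  alpha_j \<le> (\<Prod>i<j. 1 - beta_i) alpha_0, so the weight p_{j-1} = 1 / (\<Prod>i<j. 1 - beta_i) is
  cancelled by alpha_0 \<le> 1. Hence each summand is at most 2 D_X^2; none of the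
  monotonicity or Lipschitz properties of F and H is used.\<close>

lemma inverse_sum_reciprocals_bounds:
  fixes s c :: real
  assumes "0 \<le> s" "s < 1" "0 < c"
  shows "0 < inverse (1 / (1 - s) + 1 / c)" "inverse (1 / (1 - s) + 1 / c) < 1"
proof -
  have "1 \<le> 1 / (1 - s)" using assms(1,2) by (simp add: field_simps)
  moreover have "0 < 1 / c" using assms(3) by simp
  ultimately have "1 < 1 / (1 - s) + 1 / c" by linarith
  then show "0 < inverse (1 / (1 - s) + 1 / c)" "inverse (1 / (1 - s) + 1 / c) < 1"
    by (simp_all add: inverse_less_1_iff)
qed

lemma contraction_weight_bounds:
  fixes lam L c :: real
  assumes "0 < lam" "0 < L" "lam < 1 / L" "0 < c"
  shows "0 < inverse (1 / (1 - lam\<^sup>2 * L\<^sup>2) + 1 / c)"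
    "inverse (1 / (1 - lam\<^sup>2 * L\<^sup>2) + 1 / c) < 1"
proof -
  have "0 < lam * L" "lam * L < 1"
    using assms(1-3) by (simp_all add: pos_less_divide_eq)
  then have "0 \<le> (lam * L)\<^sup>2" "(lam * L)\<^sup>2 < 1" by (simp_all add: power_less_one_iff)
  then show "0 < inverse (1 / (1 - lam\<^sup>2 * L\<^sup>2) + 1 / c)"
    "inverse (1 / (1 - lam\<^sup>2 * L\<^sup>2) + 1 / c) < 1"
    using assms(4) unfolding power_mult_distrib by (fact inverse_sum_reciprocals_bounds)+
qed

lemma le_prod_mult_of_contracting:
  fixes a b :: "nat \<Rightarrow> real"
  assumes "\<And>i. b i \<le> 1" "\<And>i. a (Suc i) \<le> (1 - b i) * a i"
  shows "a j \<le> (\<Prod>i<j. 1 - b i) * a 0"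
proof (induction j)
  case 0
  then show ?case by simp
next
  case (Suc j)
  have "a (Suc j) \<le> (1 - b j) * a j" by (fact assms(2))
  also have "\<dots> \<le> (1 - b j) * ((\<Prod>i<j. 1 - b i) * a 0)"
    using Suc assms(1)[of j] by (intro mult_left_mono) auto
  also have "\<dots> = (\<Prod>i<Suc j. 1 - b i) * a 0" by simp
  finally show ?case .
qed

lemma closest_point_iterates_in_set:
  assumes "closed X" "X \<noteq> {}" "x 0 \<in> X" "\<And>k. x (Suc k) = closest_point X (z k)"
  shows "x j \<in> X"
  using assms closest_point_in_set by (cases j) auto

lemma prev_iter_in_set: "(\<And>j. x j \<in> X) \<Longrightarrow> prev_iter x j \<in> X"
  by (simp add: prev_iter_def)

lemma inertial_term_le:
  fixes p a d D :: real
  assumes "0 < p" "0 \<le> a" "a \<le> p" "p \<le> 1" "0 \<le> d" "d \<le> D"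
  shows "inverse p * (a * (1 + a) * d\<^sup>2) \<le> 2 * D\<^sup>2"
proof -
  have "inverse p * a \<le> 1" using assms(1,3) by (simp add: field_simps)
  moreover have "1 + a \<le> 2" using assms(3,4) by linarith
  moreover have "d\<^sup>2 \<le> D\<^sup>2" using assms(5,6) by (simp add: power_mono)
  ultimately have "(inverse p * a) * ((1 + a) * d\<^sup>2) \<le> 1 * (2 * D\<^sup>2)"
    using assms(1,2) by (intro mult_mono) (auto intro: mult_mono)
  then show ?thesis by (simp add: algebra_simps)
qed

theorem lemma4p13:
  fixes F H :: "'a::euclidean_space \<Rightarrow> 'a"
    and DF DH X \<Omega> :: "'a set"
    and LF LH mu :: real
    and x y :: "nat \<Rightarrow> 'a"
    and alpha lambda eta :: "nat \<Rightarrow> real"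
  assumes F_mono: "monotone_op DF F" and F_lip: "LF > 0" "LF-lipschitz_on DF F"
    and H_mono: "monotone_op DH H" and H_lip: "LH > 0" "LH-lipschitz_on DH H"
    and mu_pos: "mu > 0" and H_strong: "strongly_monotone_op mu DH H"
    and X: "X \<noteq> {}" "compact X" "convex X"
    and Om: "\<Omega> \<noteq> {}" "closed \<Omega>" "convex \<Omega>"
    and subs: "X \<subseteq> \<Omega>" "\<Omega> \<subseteq> DF \<inter> DH"
    and Q_ne: "{z \<in> X. \<forall>v\<in>X. inner (F z) (v - z) \<ge> 0} \<noteq> {}"
    and x0: "x 0 \<in> X"
    and params: "\<And>k. alpha k \<ge> 0" "\<And>k. lambda k > 0" "\<And>k. eta k > 0"
    and step_y: "\<And>k. y k = closest_point X
        (x k + alpha k *\<^sub>R (x k - prev_iter x k)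
          - lambda k *\<^sub>R (F (closest_point \<Omega> (x k + alpha k *\<^sub>R (x k - prev_iter x k)))
              + eta k *\<^sub>R H (closest_point \<Omega> (x k + alpha k *\<^sub>R (x k - prev_iter x k)))))"
    and step_x: "\<And>k. x (Suc k) = closest_point X
        (x k + alpha k *\<^sub>R (x k - prev_iter x k)
          - lambda k *\<^sub>R (F (y k) + eta k *\<^sub>R H (y k)))"
    and lam_bound: "\<And>k. lambda k < 1 / (LF + eta k * LH)"
    and alpha0: "alpha 0 \<le> 1"
    and alpha_dec: "\<And>k. alpha (Suc k) \<le>
        (1 - inverse (1 / (1 - (lambda k)\<^sup>2 * (LF + eta k * LH)\<^sup>2)
                      + 1 / (2 * lambda k * eta k * mu))) * alpha k"
    and k1: "k \<ge> 1"
  shows "(\<Sum>j<k. inverse (\<Prod>i<j. 1 - inverse (1 / (1 - (lambda i)\<^sup>2 * (LF + eta i * LH)\<^sup>2)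
                                              + 1 / (2 * lambda i * eta i * mu)))
              * (alpha j * (1 + alpha j) * (norm (x j - prev_iter x j))\<^sup>2))
         \<le> 2 * real k * (diameter X)\<^sup>2"
proof -
  define beta where "beta i = inverse (1 / (1 - (lambda i)\<^sup>2 * (LF + eta i * LH)\<^sup>2)
                                        + 1 / (2 * lambda i * eta i * mu))" for i
  define P where "P j = (\<Prod>i<j. 1 - beta i)" for j
  have beta_bounds: "0 < beta i" "beta i < 1" for i
  proof -
    have "0 < LF + eta i * LH" using F_lip(1) H_lip(1) params(3)[of i] by (simp add: add_pos_pos)
    moreover have "0 < 2 * lambda i * eta i * mu" using params(2,3)[of i] mu_pos by simp
    ultimately show "0 < beta i" "beta i < 1"
      unfolding beta_def
      using contraction_weight_bounds[OF params(2)[of i] _ lam_bound[of i]] by blast+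
  qed
  have P_bounds: "0 < P j" "P j \<le> 1" for j
    unfolding P_def using beta_bounds by (auto intro!: prod_pos prod_le_1 simp: less_imp_le)
  have alpha_le_P: "alpha j \<le> P j" for j
  proof -
    have "alpha j \<le> P j * alpha 0"
      unfolding P_def using beta_bounds(2) alpha_dec unfolding beta_def
      by (intro le_prod_mult_of_contracting) (auto simp: less_imp_le)
    also have "\<dots> \<le> P j" using P_bounds(1)[of j] alpha0 by (simp add: mult_left_le)
    finally show ?thesis .
  qed
  have xX: "x j \<in> X" for j
    using closest_point_iterates_in_set[OF compact_imp_closed[OF X(2)] X(1) x0 step_x] .
  have step_le_diam: "norm (x j - prev_iter x j) \<le> diameter X" for j
    using diameter_bounded_bound[OF compact_imp_bounded[OF X(2)] xX prev_iter_in_set[OF xX]]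
    by (simp add: dist_norm)
  have "(\<Sum>j<k. inverse (P j) * (alpha j * (1 + alpha j) * (norm (x j - prev_iter x j))\<^sup>2))
      \<le> (\<Sum>j<k. 2 * (diameter X)\<^sup>2)"
    using P_bounds params(1) alpha_le_P step_le_diam
    by (intro sum_mono inertial_term_le) auto
  then show ?thesis unfolding P_def beta_def by simp
qed

end
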